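(* There is a universal constant $C$ such that for every $K$, $T$, every sequence of multiclass outcomes $\mathbf x\in[K]^T$ fixed in advance, and every bounded proper multiclass scoring rule $\ell\in\mathcal L$, the forecasts $\mathbf p$ produced by ForecastFTPL satisfy $\mathbb E[\mathrm{Reg}_\ell(\mathbf p,\mathbf x)]\le CK\sqrt T$, i.e. $O(K\sqrt T)$.
   Context: ForecastFTPL: for $t=1,\dots,T$: for each $i\in[K]$ sample $n_{t,i}$ independently and uniformly from $\{0,1,\dots,\lfloor\sqrt T\rfloor\}$; set $\hat X_{t,i}=n_{t,i}+\sum_{s=1}^{t-1}\mathbf 1(x_s=i)$; output $p_t\in\Delta_K$ with $p_{t,i}=\hat X_{t,i}/\sum_{j=1}^K\hat X_{t,j}$ (if the denominator is $0$, output an arbitrary fixed element of $\Delta_K$); then observe $x_t$. Here $\Delta_K$ is the probability simplex in $\mathbb R^K$, outcome $i$ identified with $e_i$. A multiclass scoring rule $\ell:\Delta_K\times[K]\to\mathbb R$, with $\ell(p;q)=\sum_iq_i\ell(p,i)$, is proper if $\ell(p;p)\le\ell(p';p)$ for all $p,p'$; $\mathcal L$ is the set of proper ones with values in $[-1,1]$. With $\beta=\frac1T\sum_te_{x_t}$, $\mathrm{Reg}_\ell(\mathbf p,\mathbf x)=\sum_t\ell(p_t,x_t)-\sum_t\ell(\beta,x_t)$. *)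

theory Defs
  imports Complex_Main "HOL-Library.FuncSet"
begin

text \<open>Outcomes [K] are identified with {0..<K}; time steps are 1..T.
  Elements of the simplex Delta_K are functions nat => real vanishing outside {0..<K}.\<close>

definition simplex :: "nat \<Rightarrow> (nat \<Rightarrow> real) set" where
  "simplex K = {p. (\<forall>i. 0 \<le> p i) \<and> (\<forall>i\<ge>K. p i = 0) \<and> (\<Sum>i<K. p i) = 1}"

definition bounded_proper :: "nat \<Rightarrow> ((nat \<Rightarrow> real) \<Rightarrow> nat \<Rightarrow> real) \<Rightarrow> bool" where
  "bounded_proper K l \<longleftrightarrow>
     (\<forall>p\<in>simplex K. \<forall>p'\<in>simplex K.
        (\<Sum>i<K. p i * l p i) \<le> (\<Sum>i<K. p i * l p' i)) \<and>
     (\<forall>p\<in>simplex K. \<forall>i<K. -1 \<le> l p i \<and> l p i \<le> 1)"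

definition ftpl_forecast ::
  "nat \<Rightarrow> (nat \<Rightarrow> nat) \<Rightarrow> (nat \<Rightarrow> real) \<Rightarrow> (nat \<times> nat \<Rightarrow> nat) \<Rightarrow> nat \<Rightarrow> (nat \<Rightarrow> real)" where
  "ftpl_forecast K x d n t =
     (let X = (\<lambda>i. real (n (t, i)) + real (card {s \<in> {1..<t}. x s = i}));
          S = (\<Sum>j<K. X j)
      in if S = 0 then d else (\<lambda>i. if i < K then X i / S else 0))"

definition empirical :: "nat \<Rightarrow> (nat \<Rightarrow> nat) \<Rightarrow> (nat \<Rightarrow> real)" where
  "empirical T x = (\<lambda>i. real (card {t \<in> {1..T}. x t = i}) / real T)"

definition regret ::
  "((nat \<Rightarrow> real) \<Rightarrow> nat \<Rightarrow> real) \<Rightarrow> nat \<Rightarrow> (nat \<Rightarrow> nat \<Rightarrow> real) \<Rightarrow> (nat \<Rightarrow> nat) \<Rightarrow> real" where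
  "regret l T p x = (\<Sum>t=1..T. l (p t) (x t)) - (\<Sum>t=1..T. l (empirical T x) (x t))"

text \<open>Sample space of the noise: all n_{t,i} in {0..floor(sqrt T)}, t in 1..T, i in [K];
  independent uniform sampling = uniform distribution on this finite product set.\<close>
definition noise_space :: "nat \<Rightarrow> nat \<Rightarrow> (nat \<times> nat \<Rightarrow> nat) set" where
  "noise_space K T = PiE ({1..T} \<times> {..<K}) (\<lambda>_. {0..nat \<lfloor>sqrt (real T)\<rfloor>})"

definition expected_regret_ftpl ::
  "nat \<Rightarrow> nat \<Rightarrow> (nat \<Rightarrow> nat) \<Rightarrow> (nat \<Rightarrow> real) \<Rightarrow> ((nat \<Rightarrow> real) \<Rightarrow> nat \<Rightarrow> real) \<Rightarrow> real" where
  "expected_regret_ftpl K T x d l =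
     (\<Sum>n\<in>noise_space K T. regret l T (ftpl_forecast K x d n) x) / real (card (noise_space K T))"

end

theory Submission
  imports Defs "HOL-Combinatorics.Transposition"
begin

(* Averaging over the noise, the forecast at time t has the same distribution as if the
   single noise vector v = n_1 were reused at every step. For fixed v the forecasts follow the
   leader on the perturbed counts v + (counts so far), and for a proper scoring rule normalizing
   nonnegative weights minimizes the weighted loss; the be-the-leader argument therefore bounds
   the regret of the one-step-ahead forecasts by 2 K max v <= 2 K sqrt T. The forecast one step
   ahead is the current one with the noise coordinate x_t raised by one, so averaging over that
   uniform coordinate in {0..M}, M = floor (sqrt T), telescopes the remaining cost to 2 / (M + 1)
   per step, i.e. to at most 2 sqrt T in total. *)

definition proper_scoring :: "nat \<Rightarrow> ((nat \<Rightarrow> real) \<Rightarrow> nat \<Rightarrow> real) \<Rightarrow> bool" where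
  "proper_scoring K l \<longleftrightarrow>
     (\<forall>p\<in>simplex K. \<forall>p'\<in>simplex K. (\<Sum>i<K. p i * l p i) \<le> (\<Sum>i<K. p i * l p' i))"

lemma bounded_proper_imp_proper_scoring: "bounded_proper K l \<Longrightarrow> proper_scoring K l"
  unfolding bounded_proper_def proper_scoring_def by blast

lemma bounded_proper_abs_le:
  "bounded_proper K l \<Longrightarrow> p \<in> simplex K \<Longrightarrow> i < K \<Longrightarrow> \<bar>l p i\<bar> \<le> 1"
  unfolding bounded_proper_def by (simp add: abs_le_iff)

definition weighted_loss ::
  "nat \<Rightarrow> ((nat \<Rightarrow> real) \<Rightarrow> nat \<Rightarrow> real) \<Rightarrow> (nat \<Rightarrow> real) \<Rightarrow> (nat \<Rightarrow> real) \<Rightarrow> real" where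
  "weighted_loss K l w p = (\<Sum>i<K. w i * l p i)"

definition normalized :: "nat \<Rightarrow> (nat \<Rightarrow> real) \<Rightarrow> (nat \<Rightarrow> real) \<Rightarrow> nat \<Rightarrow> real" where
  "normalized K d w =
     (let S = (\<Sum>j<K. w j) in if S = 0 then d else (\<lambda>i. if i < K then w i / S else 0))"

lemma normalized_in_simplex:
  assumes "\<And>i. i < K \<Longrightarrow> 0 \<le> w i" and "d \<in> simplex K"
  shows "normalized K d w \<in> simplex K"
proof (cases "(\<Sum>j<K. w j) = 0")
  case True
  then show ?thesis using assms by (simp add: normalized_def)
next
  case False
  have pos: "(\<Sum>j<K. w j) > 0"
    using False assms sum_nonneg[of "{..<K}" w] by force
  have "(\<Sum>i<K. w i / (\<Sum>j<K. w j)) = 1"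
    using False by (simp add: sum_divide_distrib[symmetric])
  then show ?thesis
    using False pos assms unfolding normalized_def simplex_def Let_def
    by (auto intro!: divide_nonneg_pos)
qed

lemma normalized_minimizes_weighted_loss:
  assumes proper: "proper_scoring K l" and d: "d \<in> simplex K"
    and w: "\<And>i. i < K \<Longrightarrow> 0 \<le> w i" and p: "p \<in> simplex K"
  shows "weighted_loss K l w (normalized K d w) \<le> weighted_loss K l w p"
proof (cases "(\<Sum>j<K. w j) = 0")
  case True
  then have "\<forall>i\<in>{..<K}. w i = 0"
    using w sum_nonneg_eq_0_iff[of "{..<K}" w] by auto
  then show ?thesis by (simp add: weighted_loss_def)
next
  case False
  define S where "S = (\<Sum>j<K. w j)"
  define q where "q = normalized K d w"
  have "S > 0"
    using False w sum_nonneg[of "{..<K}" w] unfolding S_def by force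
  have q: "q \<in> simplex K"
    unfolding q_def using normalized_in_simplex[OF w d] .
  have w_eq: "w i = S * q i" if "i < K" for i
    using False \<open>S > 0\<close> that unfolding q_def normalized_def S_def[symmetric] Let_def by auto
  have "S * (\<Sum>i<K. q i * l q i) \<le> S * (\<Sum>i<K. q i * l p i)"
    using proper q p \<open>S > 0\<close> unfolding proper_scoring_def by simp
  then show ?thesis
    unfolding weighted_loss_def q_def[symmetric]
    by (simp add: w_eq sum_distrib_left mult.assoc)
qed

lemma weighted_loss_add_unit:
  assumes "j < K"
  shows "weighted_loss K l (\<lambda>i. w i + (if i = j then 1 else 0)) p = weighted_loss K l w p + l p j"
proof -
  have "(\<Sum>i<K. (w i + (if i = j then 1 else 0)) * l p i)
      = (\<Sum>i<K. w i * l p i + (if i = j then l p i else 0))"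
    by (rule sum.cong) (auto simp: distrib_right)
  then show ?thesis
    using assms by (simp add: weighted_loss_def sum.distrib)
qed

lemma weighted_loss_abs_le:
  assumes "bounded_proper K l" and "p \<in> simplex K" and "\<And>i. i < K \<Longrightarrow> 0 \<le> w i"
  shows "\<bar>weighted_loss K l w p\<bar> \<le> (\<Sum>i<K. w i)"
proof -
  have "\<bar>weighted_loss K l w p\<bar> \<le> (\<Sum>i<K. \<bar>w i * l p i\<bar>)"
    unfolding weighted_loss_def by (rule sum_abs)
  also have "\<dots> \<le> (\<Sum>i<K. w i)"
  proof (rule sum_mono)
    fix i assume "i \<in> {..<K}"
    then have "\<bar>l p i\<bar> \<le> 1" and "0 \<le> w i"
      using assms bounded_proper_abs_le by auto
    then show "\<bar>w i * l p i\<bar> \<le> w i" by (simp add: abs_mult mult_left_le)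
  qed
  finally show ?thesis .
qed

lemma weighted_loss_accumulate:
  assumes x: "\<And>t. t \<in> {1..m} \<Longrightarrow> x t < K"
    and W_Suc: "\<And>t. t \<in> {1..m} \<Longrightarrow> W (Suc t) = (\<lambda>i. W t i + (if i = x t then 1 else 0))"
  shows "weighted_loss K l (W (Suc m)) p = weighted_loss K l (W 1) p + (\<Sum>t=1..m. l p (x t))"
  using assms
proof (induction m)
  case 0
  then show ?case by simp
next
  case (Suc m)
  then show ?case
    by (simp add: weighted_loss_add_unit del: One_nat_def)
qed

lemma be_the_leader:
  assumes proper: "proper_scoring K l" and d: "d \<in> simplex K" and p: "p \<in> simplex K"
    and W_nonneg: "\<And>t i. 0 \<le> W t i"
    and x: "\<And>t. t \<in> {1..m} \<Longrightarrow> x t < K"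
    and W_Suc: "\<And>t. t \<in> {1..m} \<Longrightarrow> W (Suc t) = (\<lambda>i. W t i + (if i = x t then 1 else 0))"
  shows "weighted_loss K l (W 1) (normalized K d (W 1))
           + (\<Sum>t=1..m. l (normalized K d (W (Suc t))) (x t))
         \<le> weighted_loss K l (W (Suc m)) p"
  using p x W_Suc
proof (induction m arbitrary: p)
  case 0
  then show ?case
    using normalized_minimizes_weighted_loss[OF proper d] W_nonneg by simp
next
  case (Suc m)
  let ?q = "normalized K d (W (Suc (Suc m)))"
  have q: "?q \<in> simplex K"
    using normalized_in_simplex d W_nonneg by blast
  have "weighted_loss K l (W 1) (normalized K d (W 1))
          + (\<Sum>t=1..Suc m. l (normalized K d (W (Suc t))) (x t))
        \<le> weighted_loss K l (W (Suc m)) ?q + l ?q (x (Suc m))"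
    using Suc.IH[OF q] Suc.prems(2,3) by simp
  also have "\<dots> = weighted_loss K l (W (Suc (Suc m))) ?q"
    using Suc.prems(2,3) by (simp add: weighted_loss_add_unit)
  also have "\<dots> \<le> weighted_loss K l (W (Suc (Suc m))) p"
    using normalized_minimizes_weighted_loss[OF proper d] W_nonneg Suc.prems(1) by blast
  finally show ?case .
qed

definition count_before :: "(nat \<Rightarrow> nat) \<Rightarrow> nat \<Rightarrow> nat \<Rightarrow> nat" where
  "count_before x t i = card {s \<in> {1..<t}. x s = i}"

lemma count_before_Suc_0 [simp]: "count_before x (Suc 0) i = 0"
  by (simp add: count_before_def)

lemma count_before_Suc:
  assumes "1 \<le> t"
  shows "count_before x (Suc t) i = count_before x t i + (if i = x t then 1 else 0)"
proof -
  have "{s \<in> {1..<Suc t}. x s = i}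
      = (if i = x t then insert t {s \<in> {1..<t}. x s = i} else {s \<in> {1..<t}. x s = i})"
    using assms less_Suc_eq by auto
  then show ?thesis
    unfolding count_before_def by simp
qed

lemma sum_count_before:
  assumes "\<And>t. t \<in> {1..m} \<Longrightarrow> x t < K"
  shows "(\<Sum>i<K. count_before x (Suc m) i) = m"
  using assms
proof (induction m)
  case 0
  then show ?case by simp
next
  case (Suc m)
  have "(\<Sum>i<K. count_before x (Suc (Suc m)) i)
      = (\<Sum>i<K. count_before x (Suc m) i + (if i = x (Suc m) then 1 else 0))"
    by (simp add: count_before_Suc)
  also have "\<dots> = m + 1"
    using Suc by (simp add: sum.distrib)
  finally show ?case by simp
qed

lemma count_before_eq_0:
  assumes "\<And>t. t \<in> {1..m} \<Longrightarrow> x t < K" and "K \<le> i"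
  shows "count_before x (Suc m) i = 0"
proof -
  have "{s \<in> {1..<Suc m}. x s = i} = {}"
    using assms by fastforce
  then show ?thesis
    unfolding count_before_def by simp
qed

lemma empirical_eq_count_before: "empirical T x i = real (count_before x (Suc T) i) / real T"
  unfolding empirical_def count_before_def by (simp add: atLeastLessThanSuc_atLeastAtMost)

lemma empirical_in_simplex:
  assumes "\<forall>t\<in>{1..T}. x t < K" and "1 \<le> T"
  shows "empirical T x \<in> simplex K"
proof -
  have "(\<Sum>i<K. empirical T x i) = real (\<Sum>i<K. count_before x (Suc T) i) / real T"
    by (simp add: empirical_eq_count_before sum_divide_distrib)
  also have "\<dots> = 1"
    using assms sum_count_before[of T x K] by simp
  finally show ?thesis
    using assms count_before_eq_0[of T x K]
    unfolding simplex_def by (auto simp: empirical_eq_count_before)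
qed

definition perturbed_counts :: "(nat \<Rightarrow> nat) \<Rightarrow> (nat \<Rightarrow> nat) \<Rightarrow> nat \<Rightarrow> nat \<Rightarrow> real" where
  "perturbed_counts x v t i = real (v i) + real (count_before x t i)"

lemma perturbed_counts_nonneg: "0 \<le> perturbed_counts x v t i"
  by (simp add: perturbed_counts_def)

lemma perturbed_counts_Suc:
  "1 \<le> t \<Longrightarrow>
   perturbed_counts x v (Suc t) = (\<lambda>i. perturbed_counts x v t i + (if i = x t then 1 else 0))"
  by (auto simp: perturbed_counts_def count_before_Suc)

lemma perturbed_counts_Suc_eq_shift:
  "1 \<le> t \<Longrightarrow> perturbed_counts x v (Suc t) = perturbed_counts x (v(x t := Suc (v (x t)))) t"
  by (auto simp: perturbed_counts_def count_before_Suc)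

definition fixed_noise_forecast ::
  "nat \<Rightarrow> (nat \<Rightarrow> nat) \<Rightarrow> (nat \<Rightarrow> real) \<Rightarrow> (nat \<Rightarrow> nat) \<Rightarrow> nat \<Rightarrow> nat \<Rightarrow> real" where
  "fixed_noise_forecast K x d v t = normalized K d (perturbed_counts x v t)"

lemma ftpl_forecast_eq_fixed_noise_forecast:
  "ftpl_forecast K x d n t = fixed_noise_forecast K x d (\<lambda>i. n (t, i)) t"
  unfolding ftpl_forecast_def fixed_noise_forecast_def normalized_def perturbed_counts_def
    count_before_def Let_def
  by simp

lemma fixed_noise_forecast_in_simplex: "d \<in> simplex K \<Longrightarrow> fixed_noise_forecast K x d v t \<in> simplex K"
  unfolding fixed_noise_forecast_def using normalized_in_simplex perturbed_counts_nonneg by blast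

lemma fixed_noise_forecast_Suc:
  "1 \<le> t \<Longrightarrow>
   fixed_noise_forecast K x d v (Suc t) = fixed_noise_forecast K x d (v(x t := Suc (v (x t)))) t"
  unfolding fixed_noise_forecast_def by (simp add: perturbed_counts_Suc_eq_shift)

text \<open>By \<open>be_the_leader\<close>, the forecasts shifted one step ahead have regret at most the initial
  noise weight; the sum on the right is what the shift costs.\<close>
lemma regret_fixed_noise_le:
  assumes bp: "bounded_proper K l" and d: "d \<in> simplex K"
    and x: "\<forall>t\<in>{1..T}. x t < K" and T: "1 \<le> T" and v: "\<And>i. i < K \<Longrightarrow> v i \<le> M"
  shows "regret l T (fixed_noise_forecast K x d v) x
         \<le> 2 * real K * real M
           + (\<Sum>t=1..T. l (fixed_noise_forecast K x d v t) (x t)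
                        - l (fixed_noise_forecast K x d v (Suc t)) (x t))"
proof -
  let ?W = "perturbed_counts x v" and ?\<beta> = "empirical T x"
  have \<beta>: "?\<beta> \<in> simplex K"
    using empirical_in_simplex[OF x T] .
  have q1: "normalized K d (?W 1) \<in> simplex K"
    using normalized_in_simplex[OF _ d] perturbed_counts_nonneg by blast
  have W_Suc: "?W (Suc t) = (\<lambda>i. ?W t i + (if i = x t then 1 else 0))" if "t \<in> {1..T}" for t
    using that perturbed_counts_Suc by simp
  have "weighted_loss K l (?W 1) (normalized K d (?W 1))
          + (\<Sum>t=1..T. l (normalized K d (?W (Suc t))) (x t))
        \<le> weighted_loss K l (?W (Suc T)) ?\<beta>"
    by (rule be_the_leader[OF bounded_proper_imp_proper_scoring[OF bp] d \<beta> perturbed_counts_nonneg])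
      (use x W_Suc in auto)
  moreover have "weighted_loss K l (?W (Suc T)) ?\<beta>
                   = weighted_loss K l (?W 1) ?\<beta> + (\<Sum>t=1..T. l ?\<beta> (x t))"
    by (rule weighted_loss_accumulate) (use x W_Suc in auto)
  moreover have "(\<Sum>i<K. ?W 1 i) \<le> real K * real M"
    using sum_mono[of "{..<K}" "?W 1" "\<lambda>_. real M"] v by (simp add: perturbed_counts_def)
  moreover have "\<bar>weighted_loss K l (?W 1) ?\<beta>\<bar> \<le> (\<Sum>i<K. ?W 1 i)"
    and "\<bar>weighted_loss K l (?W 1) (normalized K d (?W 1))\<bar> \<le> (\<Sum>i<K. ?W 1 i)"
    using weighted_loss_abs_le[OF bp] \<beta> q1 perturbed_counts_nonneg by blast+
  ultimately show ?thesis
    unfolding regret_def fixed_noise_forecast_def sum_subtractf by linarith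
qed

lemma sum_PiE_insert:
  assumes "a \<notin> S"
  shows "(\<Sum>n\<in>PiE (insert a S) B. f n) = (\<Sum>y\<in>B a. \<Sum>g\<in>PiE S B. f (g(a := y)))"
proof -
  have "(\<Sum>n\<in>PiE (insert a S) B. f n) = (\<Sum>n\<in>(\<lambda>(y, g). g(a := y)) ` (B a \<times> PiE S B). f n)"
    by (simp add: PiE_insert_eq)
  also have "\<dots> = (\<Sum>(y, g)\<in>B a \<times> PiE S B. f (g(a := y)))"
    by (subst sum.reindex[OF inj_combinator[OF assms]]) (simp add: case_prod_beta')
  also have "\<dots> = (\<Sum>y\<in>B a. \<Sum>g\<in>PiE S B. f (g(a := y)))"
    by (simp add: sum.cartesian_product)
  finally show ?thesis .
qed

text \<open>Summing over the raised coordinate first, the differences telescope.\<close>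
lemma sum_PiE_increment_diff_le:
  fixes f :: "('a \<Rightarrow> nat) \<Rightarrow> real"
  assumes I: "finite I" and a: "a \<in> I" and f: "\<And>n. \<bar>f n\<bar> \<le> B"
  shows "(\<Sum>n\<in>PiE I (\<lambda>_. {0..M}). f n - f (n(a := Suc (n a))))
         \<le> 2 * B * real (card (PiE I (\<lambda>_. {0..M}))) / (real M + 1)"
proof -
  define S where "S = I - {a}"
  have I_eq: "I = insert a S" and "a \<notin> S" and "finite S"
    using a I unfolding S_def by auto
  let ?P = "PiE S (\<lambda>_. {0..M})"
  have telescope: "(\<Sum>y=0..M. f (g(a := y)) - f (g(a := Suc y))) = f (g(a := 0)) - f (g(a := Suc M))"
    for g
    using sum_telescope[of "\<lambda>y. f (g(a := y))" M] by (simp add: atLeast0AtMost)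
  have "(\<Sum>n\<in>PiE I (\<lambda>_. {0..M}). f n - f (n(a := Suc (n a))))
      = (\<Sum>g\<in>?P. \<Sum>y=0..M. f (g(a := y)) - f (g(a := Suc y)))"
    unfolding I_eq by (simp add: sum_PiE_insert[OF \<open>a \<notin> S\<close>] sum.swap[of _ "{0..M}"])
  also have "\<dots> = (\<Sum>g\<in>?P. f (g(a := 0)) - f (g(a := Suc M)))"
    by (simp only: telescope)
  also have "\<dots> \<le> (\<Sum>g\<in>?P. 2 * B)"
    by (rule sum_mono) (use f in \<open>smt (verit)\<close>)
  also have "\<dots> = 2 * B * real (card (PiE I (\<lambda>_. {0..M}))) / (real M + 1)"
    unfolding I_eq using \<open>finite S\<close> \<open>a \<notin> S\<close> by (simp add: card_PiE field_simps)
  finally show ?thesis .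
qed

lemma sum_PiE_comp_involution:
  assumes "\<And>z. \<sigma> (\<sigma> z) = z" and "\<And>z. \<sigma> z \<in> I \<longleftrightarrow> z \<in> I"
  shows "(\<Sum>n\<in>PiE I (\<lambda>_. C). h (n \<circ> \<sigma>)) = (\<Sum>n\<in>PiE I (\<lambda>_. C). h n)"
proof -
  have "bij_betw (\<lambda>n. n \<circ> \<sigma>) (PiE I (\<lambda>_. C)) (PiE I (\<lambda>_. C))"
    by (rule bij_betw_byWitness[where f' = "\<lambda>n. n \<circ> \<sigma>"])
      (use assms in \<open>auto simp: PiE_iff extensional_def\<close>)
  then show ?thesis
    by (rule sum.reindex_bij_betw)
qed

lemma sum_PiE_slice_eq:
  assumes "s \<in> A" and "t \<in> A"
  shows "(\<Sum>n\<in>PiE (A \<times> B) (\<lambda>_. C). h (\<lambda>i. n (s, i)))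
       = (\<Sum>n\<in>PiE (A \<times> B) (\<lambda>_. C). h (\<lambda>i. n (t, i)))"
proof -
  have "(\<Sum>n\<in>PiE (A \<times> B) (\<lambda>_. C). h (\<lambda>i. (n \<circ> map_prod (transpose s t) id) (t, i)))
      = (\<Sum>n\<in>PiE (A \<times> B) (\<lambda>_. C). h (\<lambda>i. n (t, i)))"
    by (rule sum_PiE_comp_involution[where h = "\<lambda>n. h (\<lambda>i. n (t, i))"])
      (use assms in \<open>auto simp: transpose_def split: if_splits\<close>)
  then show ?thesis
    by simp
qed

lemma sum_regret_ftpl_eq_fixed_noise:
  "(\<Sum>n\<in>noise_space K T. regret l T (ftpl_forecast K x d n) x)
   = (\<Sum>n\<in>noise_space K T. regret l T (fixed_noise_forecast K x d (\<lambda>i. n (1, i))) x)"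
proof -
  let ?N = "noise_space K T" and ?F = "fixed_noise_forecast K x d"
  have slice: "(\<Sum>n\<in>?N. l (?F (\<lambda>i. n (t, i)) t) (x t)) = (\<Sum>n\<in>?N. l (?F (\<lambda>i. n (1, i)) t) (x t))"
    if "t \<in> {1..T}" for t
    unfolding noise_space_def by (rule sum_PiE_slice_eq) (use that in auto)
  have "(\<Sum>n\<in>?N. \<Sum>t=1..T. l (?F (\<lambda>i. n (t, i)) t) (x t))
      = (\<Sum>t=1..T. \<Sum>n\<in>?N. l (?F (\<lambda>i. n (t, i)) t) (x t))"
    by (rule sum.swap)
  also have "\<dots> = (\<Sum>t=1..T. \<Sum>n\<in>?N. l (?F (\<lambda>i. n (1, i)) t) (x t))"
    by (rule sum.cong[OF refl], rule slice)
  also have "\<dots> = (\<Sum>n\<in>?N. \<Sum>t=1..T. l (?F (\<lambda>i. n (1, i)) t) (x t))"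
    by (rule sum.swap)
  finally show ?thesis
    unfolding regret_def ftpl_forecast_eq_fixed_noise_forecast sum_subtractf by simp
qed

lemma sum_fixed_noise_forecast_increment_le:
  assumes bp: "bounded_proper K l" and d: "d \<in> simplex K"
    and x: "\<forall>t\<in>{1..T}. x t < K" and t: "t \<in> {1..T}"
    and M: "M = nat \<lfloor>sqrt (real T)\<rfloor>"
  shows "(\<Sum>n\<in>noise_space K T. l (fixed_noise_forecast K x d (\<lambda>i. n (1, i)) t) (x t)
                               - l (fixed_noise_forecast K x d (\<lambda>i. n (1, i)) (Suc t)) (x t))
         \<le> 2 * real (card (noise_space K T)) / (real M + 1)"
proof -
  define f where "f n = l (fixed_noise_forecast K x d (\<lambda>i. n (1, i)) t) (x t)" for n :: "nat \<times> nat \<Rightarrow> nat"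
  have step: "l (fixed_noise_forecast K x d (\<lambda>i. n (1, i)) t) (x t)
               - l (fixed_noise_forecast K x d (\<lambda>i. n (1, i)) (Suc t)) (x t)
             = f n - f (n((1, x t) := Suc (n (1, x t))))" for n
  proof -
    have "(\<lambda>i. n (1, i))(x t := Suc (n (1, x t))) = (\<lambda>i. (n((1, x t) := Suc (n (1, x t)))) (1, i))"
      by auto
    then show ?thesis
      unfolding f_def using fixed_noise_forecast_Suc[of t K x d "\<lambda>i. n (1, i)"] t by simp
  qed
  have "(\<Sum>n\<in>noise_space K T. l (fixed_noise_forecast K x d (\<lambda>i. n (1, i)) t) (x t)
                                  - l (fixed_noise_forecast K x d (\<lambda>i. n (1, i)) (Suc t)) (x t))
           = (\<Sum>n\<in>PiE ({1..T} \<times> {..<K}) (\<lambda>_. {0..M}). f n - f (n((1, x t) := Suc (n (1, x t)))))"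
    unfolding noise_space_def M by (rule sum.cong[OF refl], rule step)
  also have "\<dots> \<le> 2 * 1 * real (card (PiE ({1..T} \<times> {..<K}) (\<lambda>_. {0..M}))) / (real M + 1)"
    by (rule sum_PiE_increment_diff_le)
      (use t x bp d in \<open>auto simp: f_def intro: bounded_proper_abs_le fixed_noise_forecast_in_simplex\<close>)
  finally show ?thesis
    unfolding noise_space_def M by simp
qed

lemma expected_regret_ftpl_le:
  assumes bp: "bounded_proper K l" and d: "d \<in> simplex K"
    and x: "\<forall>t\<in>{1..T}. x t < K" and T: "1 \<le> T"
    and M: "M = nat \<lfloor>sqrt (real T)\<rfloor>"
  shows "expected_regret_ftpl K T x d l \<le> 2 * real K * real M + 2 * real T / (real M + 1)"
proof -
  let ?N = "noise_space K T"
  let ?F = "\<lambda>n. fixed_noise_forecast K x d (\<lambda>i. n (1, i))"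
  have "card ?N > 0"
    unfolding noise_space_def by (simp add: card_gt_0_iff PiE_eq_empty_iff finite_PiE)
  have "(\<Sum>n\<in>?N. regret l T (ftpl_forecast K x d n) x) = (\<Sum>n\<in>?N. regret l T (?F n) x)"
    by (rule sum_regret_ftpl_eq_fixed_noise)
  also have "\<dots> \<le> (\<Sum>n\<in>?N. 2 * real K * real M
                             + (\<Sum>t=1..T. l (?F n t) (x t) - l (?F n (Suc t)) (x t)))"
    by (rule sum_mono, rule regret_fixed_noise_le[OF bp d x T])
      (use T in \<open>auto simp: noise_space_def M PiE_iff\<close>)
  also have "\<dots> = real (card ?N) * (2 * real K * real M)
                   + (\<Sum>t=1..T. \<Sum>n\<in>?N. l (?F n t) (x t) - l (?F n (Suc t)) (x t))"
    by (simp add: sum.distrib sum.swap[of _ ?N])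
  also have "\<dots> \<le> real (card ?N) * (2 * real K * real M) + (\<Sum>t=1..T. 2 * real (card ?N) / (real M + 1))"
    by (intro add_left_mono sum_mono) (rule sum_fixed_noise_forecast_increment_le[OF bp d x _ M])
  finally show ?thesis
    using \<open>card ?N > 0\<close> unfolding expected_regret_ftpl_def
    by (simp add: divide_le_eq algebra_simps)
qed

lemma perturbation_tradeoff_le:
  assumes K: "1 \<le> K" and T: "1 \<le> T" and M: "M = nat \<lfloor>sqrt (real T)\<rfloor>"
  shows "2 * real K * real M + 2 * real T / (real M + 1) \<le> 4 * real K * sqrt (real T)"
proof -
  have sqrt_T: "1 \<le> sqrt (real T)"
    using T by simp
  have M_le: "real M \<le> sqrt (real T)" and le_M: "sqrt (real T) \<le> real M + 1"
    unfolding M using real_of_int_floor_add_one_ge[of "sqrt (real T)"] by simp_all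
  have "2 * real T / (real M + 1) \<le> 2 * real T / sqrt (real T)"
    using le_M sqrt_T by (intro divide_left_mono) auto
  also have "\<dots> = 2 * sqrt (real T)"
    by (metis real_div_sqrt of_nat_0_le_iff times_divide_eq_right)
  also have "\<dots> \<le> 2 * real K * sqrt (real T)"
    using K sqrt_T by simp
  finally have "2 * real T / (real M + 1) \<le> 2 * real K * sqrt (real T)" .
  moreover have "2 * real K * real M \<le> 2 * real K * sqrt (real T)"
    using M_le by (intro mult_left_mono) auto
  ultimately show ?thesis
    by linarith
qed

theorem theorem5p9:
  shows "\<exists>C::real. \<forall>K T (x :: nat \<Rightarrow> nat) (d :: nat \<Rightarrow> real) l.
           1 \<le> K \<longrightarrow> 1 \<le> T \<longrightarrow> (\<forall>t\<in>{1..T}. x t < K) \<longrightarrow> d \<in> simplex K \<longrightarrow>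
           bounded_proper K l \<longrightarrow>
           expected_regret_ftpl K T x d l \<le> C * real K * sqrt (real T)"
proof (intro exI[of _ 4] allI impI)
  fix K T :: nat and x :: "nat \<Rightarrow> nat" and d :: "nat \<Rightarrow> real" and l
  assume K: "1 \<le> K" and T: "1 \<le> T" and x: "\<forall>t\<in>{1..T}. x t < K" and d: "d \<in> simplex K"
    and bp: "bounded_proper K l"
  let ?M = "nat \<lfloor>sqrt (real T)\<rfloor>"
  have "expected_regret_ftpl K T x d l \<le> 2 * real K * real ?M + 2 * real T / (real ?M + 1)"
    by (rule expected_regret_ftpl_le[OF bp d x T refl])
  also have "\<dots> \<le> 4 * real K * sqrt (real T)"
    by (rule perturbation_tradeoff_le[OF K T refl])
  finally show "expected_regret_ftpl K T x d l \<le> 4 * real K * sqrt (real T)" .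
qed

end
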